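(* A lower transition rate operator $\underline{Q}$ is ergodic if and only if \begin{equation*} \mathcal{X}_{\mathrm{1A}}\coloneqq \{ x\in\mathcal{X}\colon (\forall y\in\mathcal{X})~x\text{ is upper reachable from }y \}\neq\emptyset \end{equation*} and \begin{equation*} (\forall x\in\mathcal{X}\setminus\mathcal{X}_{\mathrm{1A}})~~\mathcal{X}_{\mathrm{1A}}\text{ is lower reachable from }x. \end{equation*}
   Context: $\mathcal{X}$ is a finite state space and $\mathcal{L}(\mathcal{X})$ is the set of real-valued functions on $\mathcal{X}$; $\mathbb{I}_S$ denotes the indicator of $S\subseteq\mathcal{X}$ (and $\mathbb{I}_x\coloneqq\mathbb{I}_{\{x\}}$), and $\mathbb{N}_0\coloneqq\mathbb{N}\cup\{0\}$. A lower transition rate operator is a map $\underline{Q}\colon\mathcal{L}(\mathcal{X})\to\mathcal{L}(\mathcal{X})$ such that for all $f,g\in\mathcal{L}(\mathcal{X})$, $\lambda\geq0$, $\mu\in\mathbb{R}$ and $x,y\in\mathcal{X}$: $\underline{Q}(\mu)=0$; $\underline{Q}(f+g)\geq\underline{Q}(f)+\underline{Q}(g)$; $\underline{Q}(\lambda f)=\lambda\underline{Q}(f)$; and $x\neq y\Rightarrow\underline{Q}(\mathbb{I}_y)(x)\geq0$. Its conjugate is $\overline{Q}f\coloneqq-\underline{Q}(-f)$. For each $t\geq0$, $\underline{T}_t$ is the map on $\mathcal{L}(\mathcal{X})$ defined for every $f$ by the (uniquely solvable) differential equation $\frac{d}{dt}\underline{T}_tf=\underline{Q}\,\underline{T}_tf$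 for all $t\geq0$ with $\underline{T}_0f=f$. $\underline{Q}$ is called ergodic if for every $f\in\mathcal{L}(\mathcal{X})$, $\lim_{t\to\infty}\underline{T}_tf$ exists and is a constant function. Upper reachability: for $x,y\in\mathcal{X}$, $x$ is upper reachable from $y$ if there is a sequence $y=x_0,\dots,x_n=x$ with, for all $k\in\{1,\dots,n\}$, $x_k\neq x_{k-1}$ and $\overline{Q}(\mathbb{I}_{x_k})(x_{k-1})>0$. Lower reachability: for $x\in\mathcal{X}$ and $A\subseteq\mathcal{X}$, $A$ is lower reachable from $x$ if $x\in A_n$, where $A_0\coloneqq A$, $A_{k+1}\coloneqq A_k\cup\{y\in\mathcal{X}\setminus A_k\colon\underline{Q}(\mathbb{I}_{A_k})(y)>0\}$ for $k\in\mathbb{N}_0$, and $n$ is the first index with $A_n=A_{n+1}$. *)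

theory Defs
  imports "HOL-Analysis.Analysis"
begin

definition lower_trans_rate_op :: "(('x \<Rightarrow> real) \<Rightarrow> ('x \<Rightarrow> real)) \<Rightarrow> bool" where
  "lower_trans_rate_op Q \<longleftrightarrow>
     (\<forall>\<mu>::real. Q (\<lambda>_. \<mu>) = (\<lambda>_. 0)) \<and>
     (\<forall>f g x. Q (\<lambda>y. f y + g y) x \<ge> Q f x + Q g x) \<and>
     (\<forall>(l::real)\<ge>0. \<forall>f. Q (\<lambda>y. l * f y) = (\<lambda>x. l * Q f x)) \<and>
     (\<forall>x y. x \<noteq> y \<longrightarrow> Q (indicator {y}) x \<ge> 0)"

definition upper_op :: "(('x \<Rightarrow> real) \<Rightarrow> ('x \<Rightarrow> real)) \<Rightarrow> ('x \<Rightarrow> real) \<Rightarrow> ('x \<Rightarrow> real)" where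
  "upper_op Q f = (\<lambda>x. - Q (\<lambda>y. - f y) x)"

text \<open>The derivative is taken componentwise (the state space is finite), one-sided at t = 0.
  To make the solution a unique total function we extend it constantly (= f) to t < 0.\<close>
definition lower_T :: "(('x \<Rightarrow> real) \<Rightarrow> ('x \<Rightarrow> real)) \<Rightarrow> real \<Rightarrow> ('x \<Rightarrow> real) \<Rightarrow> ('x \<Rightarrow> real)" where
  "lower_T Q t f = (THE g. g 0 = f \<and> (\<forall>r<0. g r = f) \<and>
      (\<forall>s\<ge>0. \<forall>x. ((\<lambda>r. g r x) has_real_derivative Q (g s) x) (at s within {0..}))) t"

definition ergodic :: "(('x \<Rightarrow> real) \<Rightarrow> ('x \<Rightarrow> real)) \<Rightarrow> bool" where
  "ergodic Q \<longleftrightarrow> (\<forall>f. \<exists>c::real. ((\<lambda>t. lower_T Q t f) \<longlongrightarrow> (\<lambda>_. c)) at_top)"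

definition upper_reachable :: "(('x \<Rightarrow> real) \<Rightarrow> ('x \<Rightarrow> real)) \<Rightarrow> 'x \<Rightarrow> 'x \<Rightarrow> bool" where
  "upper_reachable Q x y \<longleftrightarrow> (\<exists>xs. xs \<noteq> [] \<and> hd xs = y \<and> last xs = x \<and>
     (\<forall>k. Suc k < length xs \<longrightarrow>
        xs ! Suc k \<noteq> xs ! k \<and> upper_op Q (indicator {xs ! Suc k}) (xs ! k) > 0))"
text \<open>upper_reachable Q x y: x is upper reachable from y.\<close>

fun lower_seq :: "(('x \<Rightarrow> real) \<Rightarrow> ('x \<Rightarrow> real)) \<Rightarrow> 'x set \<Rightarrow> nat \<Rightarrow> 'x set" where
  "lower_seq Q A 0 = A"
| "lower_seq Q A (Suc k) = lower_seq Q A k \<union>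
     {y. y \<notin> lower_seq Q A k \<and> Q (indicator (lower_seq Q A k)) y > 0}"

definition lower_reachable :: "(('x \<Rightarrow> real) \<Rightarrow> ('x \<Rightarrow> real)) \<Rightarrow> 'x set \<Rightarrow> 'x \<Rightarrow> bool" where
  "lower_reachable Q A x \<longleftrightarrow>
     x \<in> lower_seq Q A (LEAST n. lower_seq Q A n = lower_seq Q A (Suc n))"
text \<open>lower_reachable Q A x: A is lower reachable from x.\<close>

definition X1A :: "(('x \<Rightarrow> real) \<Rightarrow> ('x \<Rightarrow> real)) \<Rightarrow> 'x set" where
  "X1A Q = {x. \<forall>y. upper_reachable Q x y}"

end

theory Submission
  imports Defs
begin

text \<open>
  The operators \<open>T\<^sub>t\<close> are constructed by Picard iteration; their uniqueness, monotonicity and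
  all bounds used below come from a comparison principle for sub- and supersolutions of
  \<open>d/dt u = Q u\<close>.

  Necessity: for a set C without upper transitions leaving it, \<open>Q (indicator C) \<ge> 0\<close>, so
  \<open>T\<^sub>t (indicator C) = 1\<close> on C, while \<open>Q (indicator (- C)) \<le> 0\<close>. If X1A is empty, a minimal
  such class and a state not reaching it give an indicator whose orbit keeps the values 1 and 0
  at two states; likewise for the set B where the lower reachability recursion from X1A stops,
  which satisfies \<open>Q (indicator B) \<le> 0\<close>.

  Sufficiency: the maximum of \<open>T\<^sub>t f\<close> decreases and the minimum increases. By compactness
  some limit point g of \<open>T\<^sub>k f\<close> satisfies \<open>max (T\<^sub>1 g) = max g\<close> and \<open>min (T\<^sub>1 g) = min g\<close>.
  The maximum of \<open>T\<^sub>1 g\<close> is attained on a set without upper transitions leaving it, which must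
  contain X1A, whereas the lower reachability recursion started at X1A never enters the set
  where the minimum is attained unless both extrema agree. Hence the oscillation of \<open>T\<^sub>t f\<close>
  tends to 0.
\<close>

definition fun_max :: "('x::finite \<Rightarrow> real) \<Rightarrow> real" where
  "fun_max g = Max (range g)"

definition fun_min :: "('x::finite \<Rightarrow> real) \<Rightarrow> real" where
  "fun_min g = Min (range g)"

lemma fun_max_ge: "g y \<le> fun_max g"
  unfolding fun_max_def by (rule Max_ge) auto

lemma fun_min_le: "fun_min g \<le> g y"
  unfolding fun_min_def by (rule Min_le) auto

lemma fun_max_attained: obtains x where "g x = fun_max g"
proof -
  have "Max (range g) \<in> range g" by (rule Max_in) auto
  then show ?thesis using that unfolding fun_max_def by (metis rangeE)
qed

lemma fun_min_attained: obtains x where "g x = fun_min g"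
proof -
  have "Min (range g) \<in> range g" by (rule Min_in) auto
  then show ?thesis using that unfolding fun_min_def by (metis rangeE)
qed

lemma fun_max_least: "(\<And>y. g y \<le> c) \<Longrightarrow> fun_max g \<le> c"
  by (metis fun_max_attained)

lemma fun_min_greatest: "(\<And>y. c \<le> g y) \<Longrightarrow> c \<le> fun_min g"
  by (metis fun_min_attained)

lemma fun_max_nonexpansive:
  assumes "\<And>y. \<bar>a y - b y\<bar> \<le> d"
  shows "\<bar>fun_max a - fun_max b\<bar> \<le> d"
proof -
  have "fun_max a \<le> fun_max b + d"
  proof (rule fun_max_least)
    fix y show "a y \<le> fun_max b + d" using assms[of y] fun_max_ge[of b y] by linarith
  qed
  moreover have "fun_max b \<le> fun_max a + d"
  proof (rule fun_max_least)
    fix y show "b y \<le> fun_max a + d" using assms[of y] fun_max_ge[of a y] by linarith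
  qed
  ultimately show ?thesis by simp
qed

lemma fun_min_nonexpansive:
  assumes "\<And>y. \<bar>a y - b y\<bar> \<le> d"
  shows "\<bar>fun_min a - fun_min b\<bar> \<le> d"
proof -
  have "fun_min b - d \<le> fun_min a"
  proof (rule fun_min_greatest)
    fix y show "fun_min b - d \<le> a y" using assms[of y] fun_min_le[of b y] by linarith
  qed
  moreover have "fun_min a - d \<le> fun_min b"
  proof (rule fun_min_greatest)
    fix y show "fun_min a - d \<le> b y" using assms[of y] fun_min_le[of a y] by linarith
  qed
  ultimately show ?thesis by simp
qed

lemma first_nonneg_time:
  fixes w :: "real \<Rightarrow> 'x::finite \<Rightarrow> real"
  assumes cont: "\<And>y. continuous_on {0..t0} (\<lambda>r. w r y)" and "0 \<le> t0" "0 \<le> w t0 x0"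
  obtains ts where "0 \<le> ts" "0 \<le> fun_max (w ts)" "\<And>r y. 0 \<le> r \<Longrightarrow> r < ts \<Longrightarrow> w r y < 0"
proof -
  define S where "S = (\<Union>y. {0..t0} \<inter> (\<lambda>r. w r y) -` {0..})"
  define ts where "ts = Inf S"
  have "closed S" unfolding S_def
    by (intro closed_Union) (auto intro!: continuous_closed_preimage cont)
  moreover have "t0 \<in> S"
    unfolding S_def using assms(2,3) by auto
  moreover have "bdd_below S"
    unfolding S_def by (rule bdd_belowI[of _ 0]) auto
  ultimately have "ts \<in> S"
    unfolding ts_def by (intro closed_contains_Inf) auto
  then obtain y0 where "0 \<le> w ts y0" "0 \<le> ts"
    unfolding S_def by auto
  moreover have "w r y < 0" if "0 \<le> r" "r < ts" for r y
  proof (rule ccontr)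
    assume "\<not> w r y < 0"
    moreover have "r \<le> t0" using that \<open>ts \<in> S\<close> unfolding S_def by auto
    ultimately have "r \<in> S" unfolding S_def using that by (auto intro: exI[of _ y])
    then have "ts \<le> r" unfolding ts_def by (rule cInf_lower) (auto simp: S_def)
    with that show False by simp
  qed
  ultimately show ?thesis
    using that fun_max_ge[of "w ts" y0] by fastforce
qed

lemma tendsto_fun_iff:
  fixes F :: "'a \<Rightarrow> 'x \<Rightarrow> real"
  shows "(F \<longlongrightarrow> l) net \<longleftrightarrow> (\<forall>x. ((\<lambda>t. F t x) \<longlongrightarrow> l x) net)"
proof -
  have "(F \<longlongrightarrow> l) net \<longleftrightarrow> limitin (product_topology (\<lambda>_. euclidean) UNIV) F l net"
    by (simp add: euclidean_product_topology)
  also have "\<dots> \<longleftrightarrow> (\<forall>x. ((\<lambda>t. F t x) \<longlongrightarrow> l x) net)"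
    by (subst limitin_componentwise) auto
  finally show ?thesis .
qed

lemma nonexpansive_tendsto:
  fixes \<Phi> :: "('x::finite \<Rightarrow> real) \<Rightarrow> real"
  assumes nonexp: "\<And>a b d. (\<And>y. \<bar>a y - b y\<bar> \<le> d) \<Longrightarrow> \<bar>\<Phi> a - \<Phi> b\<bar> \<le> d"
    and lim: "\<And>x. (\<lambda>k. F k x) \<longlonglongrightarrow> G x"
  shows "(\<lambda>k. \<Phi> (F k)) \<longlonglongrightarrow> \<Phi> G"
proof (rule tendstoI)
  fix e :: real assume e: "e > 0"
  have "\<forall>\<^sub>F k in sequentially. dist (F k x) (G x) < e / 2" for x
    by (rule tendstoD[OF lim]) (use e in simp)
  then have "\<forall>\<^sub>F k in sequentially. \<forall>x. dist (F k x) (G x) < e / 2"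
    by (rule eventually_all_finite)
  then show "\<forall>\<^sub>F k in sequentially. dist (\<Phi> (F k)) (\<Phi> G) < e"
  proof eventually_elim
    case (elim k)
    have "\<bar>\<Phi> (F k) - \<Phi> G\<bar> \<le> e / 2"
      by (rule nonexp) (use elim in \<open>auto simp: dist_real_def less_imp_le\<close>)
    then show ?case using e by (simp add: dist_real_def)
  qed
qed

lemma bounded_fun_seq_convergent_subseq:
  fixes a :: "nat \<Rightarrow> 'x::finite \<Rightarrow> real"
  assumes "\<And>n x. lo \<le> a n x" "\<And>n x. a n x \<le> hi"
  obtains g and r :: "nat \<Rightarrow> nat" where "strict_mono r" "(a \<circ> r) \<longlonglongrightarrow> g"
proof -
  define K where "K = (PiE UNIV (\<lambda>_::'x. {lo..hi}) :: ('x \<Rightarrow> real) set)"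
  have "compactin (product_topology (\<lambda>_. euclidean) UNIV) K"
    unfolding K_def by (subst compactin_PiE) auto
  then have "seq_compact K"
    by (simp add: euclidean_product_topology compact_imp_seq_compact)
  moreover have "a n \<in> K" for n
    unfolding K_def using assms by auto
  ultimately show ?thesis
    using that unfolding seq_compact_def by metis
qed

lemma has_integral_power_from_0:
  assumes "(t::real) \<ge> 0"
  shows "((\<lambda>s. s ^ k) has_integral t ^ Suc k / Suc k) {0..t}"
proof -
  have "((\<lambda>s. s ^ Suc k / Suc k) has_real_derivative s ^ k) (at s within {0..t})" for s :: real
  proof -
    have "((\<lambda>s. s ^ Suc k / Suc k) has_real_derivative real (Suc k) * s ^ (Suc k - Suc 0) / Suc k)
        (at s within {0..t})"
      by (rule DERIV_cdivide[OF DERIV_pow])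
    then show ?thesis by (simp del: of_nat_Suc)
  qed
  then have "((\<lambda>s. s ^ k) has_integral t ^ Suc k / Suc k - 0 ^ Suc k / Suc k) {0..t}"
    by (intro fundamental_theorem_of_calculus assms)
       (simp add: has_real_derivative_iff_has_vector_derivative)
  then show ?thesis by simp
qed

lemma integral_bound_by_power:
  fixes h :: "real \<Rightarrow> real"
  assumes "t \<ge> 0" "continuous_on {0..t} h" "\<And>s. s \<in> {0..t} \<Longrightarrow> \<bar>h s\<bar> \<le> c * (s ^ n / fact n)"
  shows "\<bar>integral {0..t} h\<bar> \<le> c * (t ^ Suc n / fact (Suc n))"
proof -
  have int: "((\<lambda>s. c / fact n * s ^ n) has_integral c / fact n * (t ^ Suc n / Suc n)) {0..t}"
    by (intro has_integral_mult_right has_integral_power_from_0 assms(1))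
  have "norm (integral {0..t} h) \<le> integral {0..t} (\<lambda>s. c / fact n * s ^ n)"
  proof (rule integral_norm_bound_integral)
    show "h integrable_on {0..t}"
      by (rule integrable_continuous_interval) (rule assms(2))
    show "(\<lambda>s. c / fact n * s ^ n) integrable_on {0..t}"
      using int by blast
    show "norm (h s) \<le> c / fact n * s ^ n" if "s \<in> {0..t}" for s
      using assms(3)[OF that] by simp
  qed
  also have "\<dots> = c / fact n * (t ^ Suc n / Suc n)"
    using int by (rule integral_unique)
  finally have "\<bar>integral {0..t} h\<bar> \<le> c / fact n * (t ^ Suc n / Suc n)"
    by simp
  then show ?thesis by (simp add: field_simps)
qed

locale lower_transition_rate_operator =
  fixes Q :: "('x::finite \<Rightarrow> real) \<Rightarrow> ('x \<Rightarrow> real)"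
  assumes lower_trans_rate_op: "lower_trans_rate_op Q"
begin

lemma Q_const: "Q (\<lambda>_. c) = (\<lambda>_. 0)"
  using lower_trans_rate_op unfolding lower_trans_rate_op_def by blast

lemma Q_superadditive: "Q f x + Q g x \<le> Q (\<lambda>y. f y + g y) x"
  using lower_trans_rate_op unfolding lower_trans_rate_op_def by blast

lemma Q_pos_homogeneous: "l \<ge> 0 \<Longrightarrow> Q (\<lambda>y. l * f y) x = l * Q f x"
  using lower_trans_rate_op unfolding lower_trans_rate_op_def by metis

lemma Q_indicator_off_diagonal: "x \<noteq> y \<Longrightarrow> 0 \<le> Q (indicator {y}) x"
  using lower_trans_rate_op unfolding lower_trans_rate_op_def by blast

lemma Q_add_const: "Q (\<lambda>y. f y + c) = Q f"
proof
  fix x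
  have "Q f x + Q (\<lambda>_. c) x \<le> Q (\<lambda>y. f y + c) x"
    by (rule Q_superadditive)
  moreover have "Q (\<lambda>y. f y + c) x + Q (\<lambda>_. - c) x \<le> Q (\<lambda>y. (f y + c) + - c) x"
    by (rule Q_superadditive)
  ultimately show "Q (\<lambda>y. f y + c) x = Q f x" by (simp add: Q_const)
qed

lemma Q_uminus_le: "Q (\<lambda>y. - f y) x \<le> - Q f x"
  using Q_superadditive[of f x "\<lambda>y. - f y"] Q_const[of 0] by (simp add: fun_eq_iff)

lemma Q_indicator_Compl: "Q (indicator (- C)) = Q (\<lambda>y. - indicator C y)"
proof -
  have "(indicator (- C) :: 'x \<Rightarrow> real) = (\<lambda>y. - indicator C y + 1)"
    by (auto simp: indicator_def)
  then show ?thesis by (simp only: Q_add_const)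
qed

lemma Q_superadditive_sum: "finite S \<Longrightarrow> (\<Sum>i\<in>S. Q (g i) x) \<le> Q (\<lambda>y. \<Sum>i\<in>S. g i y) x"
proof (induction S rule: finite_induct)
  case empty
  then show ?case using Q_const[of 0] by simp
next
  case (insert a S)
  then show ?case
    using Q_superadditive[of "g a" x "\<lambda>y. \<Sum>i\<in>S. g i y"] by simp
qed

lemma Q_sum_singletons_le: "(\<Sum>y\<in>UNIV. Q (\<lambda>z. f y * indicator {y} z) x) \<le> Q f x"
proof -
  have "(\<lambda>z. \<Sum>y\<in>UNIV. f y * indicator {y} z) = f"
  proof
    fix z
    have "(\<Sum>y\<in>UNIV. f y * indicator {y} z) = (\<Sum>y\<in>{z}. f y * indicator {y} z)"
      by (rule sum.mono_neutral_right) auto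
    then show "(\<Sum>y\<in>UNIV. f y * indicator {y} z) = f z" by simp
  qed
  then show ?thesis
    using Q_superadditive_sum[of UNIV "\<lambda>y z. f y * indicator {y} z" x] by simp
qed

lemma Q_nonneg_at_zero_of_nonneg:
  assumes "\<And>y. 0 \<le> h y" "h x = 0"
  shows "0 \<le> Q h x"
proof -
  have "0 \<le> Q (\<lambda>z. h y * indicator {y} z) x" for y
  proof (cases "y = x")
    case True
    then show ?thesis using assms(2) Q_const[of 0] by simp
  next
    case False
    then show ?thesis
      using Q_pos_homogeneous[OF assms(1)] Q_indicator_off_diagonal[of x y] assms(1)[of y] by simp
  qed
  then show ?thesis
    using Q_sum_singletons_le[of h x] sum_nonneg[of UNIV] by (meson order_trans)
qed

lemma Q_le_at_max_difference:
  assumes "\<And>y. f y - g y \<le> f x - g x"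
  shows "Q f x \<le> Q g x"
proof -
  have "Q f x + Q (\<lambda>y. g y - f y) x \<le> Q g x"
    using Q_superadditive[of f x "\<lambda>y. g y - f y"] by simp
  moreover have "Q (\<lambda>y. g y - f y) x = Q (\<lambda>y. (g y - f y) + (f x - g x)) x"
    by (simp add: Q_add_const)
  moreover have "0 \<le> Q (\<lambda>y. (g y - f y) + (f x - g x)) x"
    by (rule Q_nonneg_at_zero_of_nonneg) (use assms in \<open>auto simp: algebra_simps\<close>)
  ultimately show ?thesis by linarith
qed

definition rate_bound :: real where
  "rate_bound = (\<Sum>x\<in>UNIV. \<Sum>y\<in>UNIV. \<bar>Q (indicator {y}) x\<bar> + \<bar>Q (\<lambda>z. - indicator {y} z) x\<bar>)"

lemma rate_bound_nonneg: "0 \<le> rate_bound"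
  unfolding rate_bound_def by (auto intro!: sum_nonneg)

lemma rate_bound_ge: "\<bar>Q (indicator {y}) x\<bar> + \<bar>Q (\<lambda>z. - indicator {y} z) x\<bar> \<le> rate_bound"
proof -
  have "\<bar>Q (indicator {y}) x\<bar> + \<bar>Q (\<lambda>z. - indicator {y} z) x\<bar>
     \<le> (\<Sum>y\<in>UNIV. \<bar>Q (indicator {y}) x\<bar> + \<bar>Q (\<lambda>z. - indicator {y} z) x\<bar>)"
    by (rule member_le_sum) auto
  also have "\<dots> \<le> rate_bound"
    unfolding rate_bound_def by (rule member_le_sum) (auto intro: sum_nonneg)
  finally show ?thesis .
qed

lemma Q_scaled_indicator_ge: "- \<bar>c\<bar> * rate_bound \<le> Q (\<lambda>z. c * indicator {y} z) x"
proof (cases "c \<ge> 0")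
  case True
  then have "Q (\<lambda>z. c * indicator {y} z) x = c * Q (indicator {y}) x"
    using Q_pos_homogeneous[OF True, of "indicator {y}"] by simp
  moreover have "c * (- rate_bound) \<le> c * Q (indicator {y}) x"
    using True rate_bound_ge[of y x] by (intro mult_left_mono) auto
  ultimately show ?thesis using True by simp
next
  case False
  have "(\<lambda>z. c * indicator {y} z) = (\<lambda>z. (- c) * (- indicator {y} z))" by auto
  then have "Q (\<lambda>z. c * indicator {y} z) x = (- c) * Q (\<lambda>z. - indicator {y} z) x"
    using Q_pos_homogeneous[of "- c" "\<lambda>z. - indicator {y} z"] False by simp
  moreover have "(- c) * (- rate_bound) \<le> (- c) * Q (\<lambda>z. - indicator {y} z) x"
    using False rate_bound_ge[of y x] by (intro mult_left_mono) auto
  ultimately show ?thesis using False by simp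
qed

lemma Q_ge: "- rate_bound * (\<Sum>y\<in>UNIV. \<bar>f y\<bar>) \<le> Q f x"
proof -
  have "- rate_bound * (\<Sum>y\<in>UNIV. \<bar>f y\<bar>) = (\<Sum>y\<in>UNIV. - \<bar>f y\<bar> * rate_bound)"
    by (simp add: sum_distrib_left sum_negf mult.commute)
  also have "\<dots> \<le> (\<Sum>y\<in>UNIV. Q (\<lambda>z. f y * indicator {y} z) x)"
    by (intro sum_mono Q_scaled_indicator_ge)
  also have "\<dots> \<le> Q f x" by (rule Q_sum_singletons_le)
  finally show ?thesis .
qed

lemma Q_lipschitz: "\<bar>Q f x - Q g x\<bar> \<le> rate_bound * (\<Sum>y\<in>UNIV. \<bar>f y - g y\<bar>)"
proof -
  have "Q g x + Q (\<lambda>y. f y - g y) x \<le> Q f x"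
    using Q_superadditive[of g x "\<lambda>y. f y - g y"] by simp
  moreover have "Q f x + Q (\<lambda>y. g y - f y) x \<le> Q g x"
    using Q_superadditive[of f x "\<lambda>y. g y - f y"] by simp
  moreover have "- rate_bound * (\<Sum>y\<in>UNIV. \<bar>f y - g y\<bar>) \<le> Q (\<lambda>y. f y - g y) x"
    by (rule Q_ge)
  moreover have "- rate_bound * (\<Sum>y\<in>UNIV. \<bar>f y - g y\<bar>) \<le> Q (\<lambda>y. g y - f y) x"
    using Q_ge[of "\<lambda>y. g y - f y" x] by (simp add: abs_minus_commute)
  ultimately show ?thesis by linarith
qed

lemma continuous_on_Q:
  assumes "\<And>z. continuous_on S (\<lambda>s. g s z)"
  shows "continuous_on S (\<lambda>s. Q (g s) x)"
  unfolding continuous_on_def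
proof
  fix s0 assume "s0 \<in> S"
  then have "((\<lambda>s. g s z) \<longlongrightarrow> g s0 z) (at s0 within S)" for z
    using assms[of z] unfolding continuous_on_def by blast
  then have "((\<lambda>s. rate_bound * (\<Sum>z\<in>UNIV. \<bar>g s z - g s0 z\<bar>)) \<longlongrightarrow> 0) (at s0 within S)"
    by (auto intro!: tendsto_eq_intros)
  then have "((\<lambda>s. Q (g s) x - Q (g s0) x) \<longlongrightarrow> 0) (at s0 within S)"
    by (rule Lim_null_comparison[rotated]) (auto intro!: always_eventually Q_lipschitz)
  then show "((\<lambda>s. Q (g s) x) \<longlongrightarrow> Q (g s0) x) (at s0 within S)"
    by (rule LIM_zero_cancel)
qed

lemma uniform_limit_Q:
  assumes "\<And>z. uniform_limit S (\<lambda>n s. F n s z) (\<lambda>s. G s z) sequentially"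
  shows "uniform_limit S (\<lambda>n s. Q (F n s) x) (\<lambda>s. Q (G s) x) sequentially"
proof (rule uniform_limitI)
  fix e :: real assume e: "e > 0"
  define L where "L = real CARD('x) * rate_bound + 1"
  have L: "L > 0" unfolding L_def using rate_bound_nonneg by (simp add: add_nonneg_pos)
  have "\<forall>\<^sub>F n in sequentially. \<forall>s\<in>S. dist (F n s z) (G s z) < e / L" for z
    using uniform_limitD[OF assms] e L by simp
  then have "\<forall>\<^sub>F n in sequentially. \<forall>z. \<forall>s\<in>S. dist (F n s z) (G s z) < e / L"
    by (rule eventually_all_finite)
  then show "\<forall>\<^sub>F n in sequentially. \<forall>s\<in>S. dist (Q (F n s) x) (Q (G s) x) < e"
  proof eventually_elim
    case (elim n)
    show ?case
    proof
      fix s assume s: "s \<in> S"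
      have "dist (Q (F n s) x) (Q (G s) x) \<le> rate_bound * (\<Sum>z\<in>UNIV. \<bar>F n s z - G s z\<bar>)"
        unfolding dist_real_def by (rule Q_lipschitz)
      also have "\<dots> \<le> rate_bound * (\<Sum>z\<in>(UNIV::'x set). e / L)"
        using elim s by (intro mult_left_mono sum_mono rate_bound_nonneg)
          (auto simp: dist_real_def less_imp_le)
      also have "\<dots> = (L - 1) * (e / L)"
        by (simp add: L_def)
      also have "\<dots> < e"
        using e L by (simp add: field_simps)
      finally show "dist (Q (F n s) x) (Q (G s) x) < e" .
    qed
  qed
qed

end

section \<open>A comparison principle\<close>

context lower_transition_rate_operator
begin

text \<open>Consider the first time the margin \<open>\<epsilon> (1 + t)\<close> is reached: there the largest component of
  u - v cannot increase, because Q is monotone at points of maximal difference.\<close>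

lemma comparison_margin:
  fixes u v du dv :: "real \<Rightarrow> 'x \<Rightarrow> real"
  assumes du: "\<And>t x. t \<ge> 0 \<Longrightarrow> ((\<lambda>r. u r x) has_real_derivative du t x) (at t within {0..})"
    and dv: "\<And>t x. t \<ge> 0 \<Longrightarrow> ((\<lambda>r. v r x) has_real_derivative dv t x) (at t within {0..})"
    and sub: "\<And>t x. t \<ge> 0 \<Longrightarrow> du t x \<le> Q (u t) x"
    and super: "\<And>t x. t \<ge> 0 \<Longrightarrow> Q (v t) x \<le> dv t x"
    and init: "\<And>x. u 0 x \<le> v 0 x"
    and "t0 \<ge> 0" "\<epsilon> > 0"
  shows "u t0 x0 - v t0 x0 < \<epsilon> * (1 + t0)"
proof (rule ccontr)
  assume reached: "\<not> ?thesis"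
  define w where "w r y = u r y - v r y - \<epsilon> * (1 + r)" for r y
  have dw: "((\<lambda>r. w r y) has_real_derivative du t y - dv t y - \<epsilon>) (at t within {0..})"
    if "t \<ge> 0" for t y
    unfolding w_def using du[OF that, of y] dv[OF that, of y]
    by (auto intro!: derivative_eq_intros)
  have "continuous_on {0..} (\<lambda>r. w r y)" for y
    using dw by (auto simp: continuous_on_eq_continuous_within intro: DERIV_continuous)
  then have "continuous_on {0..t0} (\<lambda>r. w r y)" for y
    by (rule continuous_on_subset) auto
  moreover have "0 \<le> w t0 x0"
    using reached unfolding w_def by simp
  ultimately obtain ts where ts: "0 \<le> ts" "0 \<le> fun_max (w ts)"
    and before: "\<And>r y. 0 \<le> r \<Longrightarrow> r < ts \<Longrightarrow> w r y < 0"
    using first_nonneg_time \<open>t0 \<ge> 0\<close> by metis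
  obtain x where x: "w ts x = fun_max (w ts)"
    by (rule fun_max_attained)
  have "w 0 x < 0"
    unfolding w_def using init[of x] \<open>\<epsilon> > 0\<close> by simp
  with ts x have "ts > 0" by (cases "ts = 0") auto
  have "u ts y - v ts y \<le> u ts x - v ts x" for y
    using fun_max_ge[of "w ts" y] x unfolding w_def by simp
  then have "Q (u ts) x \<le> Q (v ts) x"
    by (rule Q_le_at_max_difference)
  then have "du ts x - dv ts x - \<epsilon> < 0"
    using sub[of ts x] super[of ts x] ts \<open>\<epsilon> > 0\<close> by simp
  then obtain d where d: "d > 0" "\<And>h. h > 0 \<Longrightarrow> ts - h \<in> {0..} \<Longrightarrow> h < d \<Longrightarrow> w ts x < w (ts - h) x"
    using has_real_derivative_neg_dec_left[OF dw[OF ts(1)]] by blast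
  define h where "h = min (d / 2) ts"
  have "h > 0" "ts - h \<ge> 0" "h < d"
    using d \<open>ts > 0\<close> unfolding h_def by auto
  then have "w ts x < w (ts - h) x" using d by auto
  moreover have "w (ts - h) x < 0" using before[of "ts - h" x] \<open>h > 0\<close> \<open>ts - h \<ge> 0\<close> by simp
  ultimately show False using ts x by simp
qed

lemma comparison:
  fixes u v du dv :: "real \<Rightarrow> 'x \<Rightarrow> real"
  assumes du: "\<And>t x. t \<ge> 0 \<Longrightarrow> ((\<lambda>r. u r x) has_real_derivative du t x) (at t within {0..})"
    and dv: "\<And>t x. t \<ge> 0 \<Longrightarrow> ((\<lambda>r. v r x) has_real_derivative dv t x) (at t within {0..})"
    and sub: "\<And>t x. t \<ge> 0 \<Longrightarrow> du t x \<le> Q (u t) x"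
    and super: "\<And>t x. t \<ge> 0 \<Longrightarrow> Q (v t) x \<le> dv t x"
    and init: "\<And>x. u 0 x \<le> v 0 x"
    and "t0 \<ge> 0"
  shows "u t0 x0 \<le> v t0 x0"
proof (rule field_le_epsilon)
  fix e :: real assume "e > 0"
  have "u t0 x0 - v t0 x0 < (e / (1 + t0)) * (1 + t0)"
    by (rule comparison_margin[OF du dv sub super init]) (use \<open>e > 0\<close> \<open>t0 \<ge> 0\<close> in auto)
  then show "u t0 x0 \<le> v t0 x0 + e" using \<open>t0 \<ge> 0\<close> by simp
qed

end

section \<open>Construction of the lower transition operators\<close>

definition solves_rate_equation ::
    "(('x \<Rightarrow> real) \<Rightarrow> ('x \<Rightarrow> real)) \<Rightarrow> ('x \<Rightarrow> real) \<Rightarrow> (real \<Rightarrow> 'x \<Rightarrow> real) \<Rightarrow> bool" where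
  "solves_rate_equation Q f g \<longleftrightarrow> g 0 = f \<and> (\<forall>r<0. g r = f) \<and>
      (\<forall>s\<ge>0. \<forall>x. ((\<lambda>r. g r x) has_real_derivative Q (g s) x) (at s within {0..}))"

context lower_transition_rate_operator
begin

primrec picard :: "('x \<Rightarrow> real) \<Rightarrow> nat \<Rightarrow> real \<Rightarrow> 'x \<Rightarrow> real" where
  "picard f 0 t y = f y"
| "picard f (Suc n) t y = f y + integral {0..t} (\<lambda>s. Q (picard f n s) y)"

declare picard.simps(2) [simp del]

lemma picard_0 [simp]: "picard f 0 t = f"
  by (simp add: fun_eq_iff)

lemma picard_continuous: "continuous_on {0..b} (\<lambda>s. picard f n s y)"
proof (induction n arbitrary: y)
  case 0
  then show ?case by simp
next
  case (Suc n)
  have "continuous_on {0..b} (\<lambda>s. Q (picard f n s) y)"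
    by (rule continuous_on_Q) (rule Suc.IH)
  then have "continuous_on {0..b} (\<lambda>t. integral {0..t} (\<lambda>s. Q (picard f n s) y))"
    by (intro indefinite_integral_continuous_1 integrable_continuous_interval)
  then show ?case
    by (auto simp: picard.simps(2) intro!: continuous_intros)
qed

definition picard_rate :: real where
  "picard_rate = real CARD('x) * rate_bound + 1"

lemma picard_rate_pos: "0 < picard_rate"
  unfolding picard_rate_def using rate_bound_nonneg by (simp add: add_nonneg_pos)

lemma picard_increment_propagates:
  assumes "t \<ge> 0" and IH: "\<And>s. s \<in> {0..t} \<Longrightarrow>
      (\<Sum>z\<in>UNIV. \<bar>picard f (Suc n) s z - picard f n s z\<bar>) \<le> C * (s ^ Suc n / fact (Suc n))"
  shows "\<bar>picard f (Suc (Suc n)) t y - picard f (Suc n) t y\<bar>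
    \<le> rate_bound * C * (t ^ Suc (Suc n) / fact (Suc (Suc n)))"
proof -
  have cont: "continuous_on {0..t} (\<lambda>s. Q (picard f m s) y)" for m
    by (intro continuous_on_Q picard_continuous)
  have "\<bar>Q (picard f (Suc n) s) y - Q (picard f n s) y\<bar> \<le> rate_bound * C * (s ^ Suc n / fact (Suc n))"
    if "s \<in> {0..t}" for s
  proof -
    have "\<bar>Q (picard f (Suc n) s) y - Q (picard f n s) y\<bar>
        \<le> rate_bound * (\<Sum>z\<in>UNIV. \<bar>picard f (Suc n) s z - picard f n s z\<bar>)"
      by (rule Q_lipschitz)
    also have "\<dots> \<le> rate_bound * (C * (s ^ Suc n / fact (Suc n)))"
      using IH[OF that] by (intro mult_left_mono rate_bound_nonneg)
    finally show ?thesis by simp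
  qed
  then have "\<bar>integral {0..t} (\<lambda>s. Q (picard f (Suc n) s) y - Q (picard f n s) y)\<bar>
      \<le> rate_bound * C * (t ^ Suc (Suc n) / fact (Suc (Suc n)))"
    using assms(1) cont by (intro integral_bound_by_power continuous_on_diff) auto
  then show ?thesis
    using cont by (simp add: picard.simps(2) integral_diff integrable_continuous_interval)
qed

lemma picard_increment_bound:
  assumes "t \<ge> 0"
  shows "(\<Sum>y\<in>UNIV. \<bar>picard f (Suc n) t y - picard f n t y\<bar>)
    \<le> (\<Sum>y\<in>UNIV. \<bar>Q f y\<bar>) * picard_rate ^ n * (t ^ Suc n / fact (Suc n))"
  using assms
proof (induction n arbitrary: t)
  case 0
  have "(\<Sum>y\<in>UNIV. \<bar>picard f (Suc 0) t y - picard f 0 t y\<bar>) = (\<Sum>y\<in>UNIV. t * \<bar>Q f y\<bar>)"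
    using 0 by (simp add: picard.simps(2) abs_mult)
  then show ?case
    by (simp add: sum_distrib_left mult.commute)
next
  case (Suc n)
  define C where "C = (\<Sum>y\<in>UNIV. \<bar>Q f y\<bar>) * picard_rate ^ n"
  define X where "X = t ^ Suc (Suc n) / fact (Suc (Suc n))"
  have "(\<Sum>y\<in>UNIV. \<bar>picard f (Suc (Suc n)) t y - picard f (Suc n) t y\<bar>)
      \<le> (\<Sum>y\<in>(UNIV::'x set). rate_bound * C * X)"
    unfolding X_def C_def using Suc by (intro sum_mono picard_increment_propagates) auto
  also have "\<dots> = real CARD('x) * rate_bound * C * X"
    by simp
  also have "\<dots> \<le> picard_rate * C * X"
    using Suc.prems picard_rate_pos unfolding picard_rate_def C_def X_def
    by (intro mult_right_mono) (auto intro!: sum_nonneg)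
  also have "\<dots> = (\<Sum>y\<in>UNIV. \<bar>Q f y\<bar>) * picard_rate ^ Suc n * X"
    by (simp add: C_def)
  finally show ?case
    by (simp only: X_def)
qed

definition picard_limit :: "('x \<Rightarrow> real) \<Rightarrow> real \<Rightarrow> 'x \<Rightarrow> real" where
  "picard_limit f t y = f y + (\<Sum>i. picard f (Suc i) t y - picard f i t y)"

lemma picard_uniform_limit:
  assumes "b \<ge> 0"
  shows "uniform_limit {0..b} (\<lambda>n t. picard f n t y) (\<lambda>t. picard_limit f t y) sequentially"
proof -
  define C where "C = (\<Sum>y\<in>UNIV. \<bar>Q f y\<bar>)"
  define L where "L = picard_rate"
  have "uniform_limit {0..b} (\<lambda>n t. \<Sum>i<n. picard f (Suc i) t y - picard f i t y)
          (\<lambda>t. \<Sum>i. picard f (Suc i) t y - picard f i t y) sequentially"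
  proof (rule Weierstrass_m_test)
    fix n t assume t: "t \<in> {0..b}"
    have "\<bar>picard f (Suc n) t y - picard f n t y\<bar> \<le> (\<Sum>y\<in>UNIV. \<bar>picard f (Suc n) t y - picard f n t y\<bar>)"
      by (rule member_le_sum) auto
    also have "\<dots> \<le> C * L ^ n * (t ^ Suc n / fact (Suc n))"
      unfolding C_def L_def by (rule picard_increment_bound) (use t in auto)
    also have "\<dots> \<le> C * L ^ n * (b ^ Suc n / fact (Suc n))"
      using t picard_rate_pos unfolding C_def L_def
      by (intro mult_left_mono divide_right_mono power_mono) (auto intro!: sum_nonneg)
    finally show "norm (picard f (Suc n) t y - picard f n t y) \<le> C * L ^ n * (b ^ Suc n / fact (Suc n))"
      by simp
  next
    have "summable (\<lambda>i. (L * b) ^ Suc i /\<^sub>R fact (Suc i))"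
      using summable_ignore_initial_segment[OF sums_summable[OF exp_converges], of 1]
      by (simp only: Suc_eq_plus1)
    then have "summable (\<lambda>i. C / L * ((L * b) ^ Suc i /\<^sub>R fact (Suc i)))"
      by (rule summable_mult)
    then show "summable (\<lambda>n. C * L ^ n * (b ^ Suc n / fact (Suc n)))"
      using picard_rate_pos unfolding L_def by (simp add: field_simps power_mult_distrib)
  qed
  then have "uniform_limit {0..b} (\<lambda>n t. f y + (\<Sum>i<n. picard f (Suc i) t y - picard f i t y))
          (\<lambda>t. picard_limit f t y) sequentially"
    unfolding picard_limit_def by (intro uniform_limit_add uniform_limit_const)
  then show ?thesis
    by (simp add: sum_lessThan_telescope[where f="\<lambda>i. picard f i _ y"])
qed

lemma picard_limit_continuous: "b \<ge> 0 \<Longrightarrow> continuous_on {0..b} (\<lambda>t. picard_limit f t y)"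
  by (rule uniform_limit_theorem[OF _ picard_uniform_limit]) (auto intro: always_eventually picard_continuous)

lemma picard_limit_integral_equation:
  assumes "t \<ge> 0"
  shows "picard_limit f t y = f y + integral {0..t} (\<lambda>s. Q (picard_limit f s) y)"
proof -
  have cont: "continuous_on {0..t} (\<lambda>s. Q (picard f n s) y)" for n
    by (rule continuous_on_Q) (rule picard_continuous)
  obtain I J where I: "\<And>n. ((\<lambda>s. Q (picard f n s) y) has_integral I n) {0..t}"
    and J: "((\<lambda>s. Q (picard_limit f s) y) has_integral J) {0..t}" and "I \<longlonglongrightarrow> J"
    using uniform_limit_integral[OF uniform_limit_Q[OF picard_uniform_limit[OF assms]] cont,
        OF trivial_limit_sequentially]
    by blast
  have "(\<lambda>n. picard f (Suc n) t y) = (\<lambda>n. f y + I n)"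
    using I by (auto simp: picard.simps(2) integral_unique)
  then have "(\<lambda>n. picard f (Suc n) t y) \<longlonglongrightarrow> f y + J"
    using \<open>I \<longlonglongrightarrow> J\<close> by (auto intro!: tendsto_intros)
  moreover have "(\<lambda>n. picard f (Suc n) t y) \<longlonglongrightarrow> picard_limit f t y"
    using tendsto_uniform_limitI[OF picard_uniform_limit[OF assms]] assms
    by (auto intro: LIMSEQ_Suc)
  ultimately have "picard_limit f t y = f y + J"
    using LIMSEQ_unique by blast
  then show ?thesis using J by (simp add: integral_unique)
qed

lemma picard_limit_has_derivative:
  assumes "t \<ge> 0"
  shows "((\<lambda>r. picard_limit f r y) has_real_derivative Q (picard_limit f t) y) (at t within {0..})"
proof -
  have "continuous_on {0..t+1} (\<lambda>s. Q (picard_limit f s) y)"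
    by (rule continuous_on_Q) (rule picard_limit_continuous, use assms in simp)
  then have "((\<lambda>r. integral {0..r} (\<lambda>s. Q (picard_limit f s) y)) has_vector_derivative
      Q (picard_limit f t) y) (at t within {0..t+1})"
    by (rule integral_has_vector_derivative) (use assms in auto)
  then have "((\<lambda>r. f y + integral {0..r} (\<lambda>s. Q (picard_limit f s) y)) has_real_derivative
      Q (picard_limit f t) y) (at t within {0..t+1})"
    by (auto simp: has_real_derivative_iff_has_vector_derivative[symmetric] intro!: derivative_eq_intros)
  then have "((\<lambda>r. picard_limit f r y) has_real_derivative Q (picard_limit f t) y) (at t within {0..t+1})"
    by (rule has_field_derivative_transform_within[where d=1])
      (use assms picard_limit_integral_equation in auto)
  moreover have "at t within {0..t+1} = at t within {0..}"
    by (rule at_within_nhd[where S="{t-1<..<t+1}"]) auto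
  ultimately show ?thesis by simp
qed

lemma solves_rate_equation_exists:
  "solves_rate_equation Q f (\<lambda>r. if r < 0 then f else picard_limit f r)"
proof -
  have "picard_limit f 0 = f"
    using picard_limit_integral_equation[of 0] by auto
  moreover have "((\<lambda>r. (if r < 0 then f else picard_limit f r) x) has_real_derivative
      Q (picard_limit f s) x) (at s within {0..})" if "s \<ge> 0" for s x
    by (rule has_field_derivative_transform_within[OF picard_limit_has_derivative[OF that], where d=1])
      (use that in auto)
  ultimately show ?thesis
    unfolding solves_rate_equation_def by auto
qed

lemma solves_rate_equation_unique:
  assumes "solves_rate_equation Q f g1" "solves_rate_equation Q f g2"
  shows "g1 = g2"
proof (intro ext)
  fix t x
  show "g1 t x = g2 t x"
  proof (cases "t < 0")
    case True
    then show ?thesis using assms unfolding solves_rate_equation_def by auto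
  next
    case False
    have "g1 t x \<le> g2 t x"
      by (rule comparison[where du="\<lambda>s. Q (g1 s)" and dv="\<lambda>s. Q (g2 s)"])
        (use assms False in \<open>auto simp: solves_rate_equation_def\<close>)
    moreover have "g2 t x \<le> g1 t x"
      by (rule comparison[where du="\<lambda>s. Q (g2 s)" and dv="\<lambda>s. Q (g1 s)"])
        (use assms False in \<open>auto simp: solves_rate_equation_def\<close>)
    ultimately show ?thesis by simp
  qed
qed

lemma lower_T_eq_solution:
  assumes "solves_rate_equation Q f g"
  shows "lower_T Q t f = g t"
proof -
  have "(THE g. solves_rate_equation Q f g) = g"
    using assms solves_rate_equation_unique by blast
  then show ?thesis
    unfolding lower_T_def solves_rate_equation_def[symmetric] by simp
qed

lemma lower_T_solves_rate_equation: "solves_rate_equation Q f (\<lambda>r. lower_T Q r f)"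
  using solves_rate_equation_exists lower_T_eq_solution[OF solves_rate_equation_exists] by presburger

lemma lower_T_0: "lower_T Q 0 f = f"
  using lower_T_solves_rate_equation unfolding solves_rate_equation_def by blast

lemma lower_T_has_derivative:
  "t \<ge> 0 \<Longrightarrow> ((\<lambda>r. lower_T Q r f x) has_real_derivative Q (lower_T Q t f) x) (at t within {0..})"
  using lower_T_solves_rate_equation unfolding solves_rate_equation_def by blast

end

context lower_transition_rate_operator
begin

lemma lower_T_le_supersolution:
  assumes dv: "\<And>t x. t \<ge> 0 \<Longrightarrow> ((\<lambda>r. v r x) has_real_derivative dv t x) (at t within {0..})"
    and super: "\<And>t x. t \<ge> 0 \<Longrightarrow> Q (v t) x \<le> dv t x"
    and init: "\<And>x. f x \<le> v 0 x" and "t \<ge> 0"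
  shows "lower_T Q t f x \<le> v t x"
  by (rule comparison[where du="\<lambda>s. Q (lower_T Q s f)", OF lower_T_has_derivative dv _ super])
    (use init \<open>t \<ge> 0\<close> lower_T_0 in auto)

lemma lower_T_ge_subsolution:
  assumes du: "\<And>t x. t \<ge> 0 \<Longrightarrow> ((\<lambda>r. u r x) has_real_derivative du t x) (at t within {0..})"
    and sub: "\<And>t x. t \<ge> 0 \<Longrightarrow> du t x \<le> Q (u t) x"
    and init: "\<And>x. u 0 x \<le> f x" and "t \<ge> 0"
  shows "u t x \<le> lower_T Q t f x"
  by (rule comparison[where dv="\<lambda>s. Q (lower_T Q s f)", OF du lower_T_has_derivative sub])
    (use init \<open>t \<ge> 0\<close> lower_T_0 in auto)

lemma lower_T_le_if_Q_nonpos: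
  assumes "\<And>x. Q g x \<le> 0" "\<And>x. f x \<le> g x" "t \<ge> 0"
  shows "lower_T Q t f x \<le> g x"
  using lower_T_le_supersolution[where v="\<lambda>_. g" and dv="\<lambda>_ _. 0"] assms by auto

lemma lower_T_ge_if_Q_nonneg:
  assumes "\<And>x. 0 \<le> Q g x" "\<And>x. g x \<le> f x" "t \<ge> 0"
  shows "g x \<le> lower_T Q t f x"
  using lower_T_ge_subsolution[where u="\<lambda>_. g" and du="\<lambda>_ _. 0"] assms by auto

lemma lower_T_le_const: "(\<And>y. f y \<le> c) \<Longrightarrow> t \<ge> 0 \<Longrightarrow> lower_T Q t f x \<le> c"
  using lower_T_le_if_Q_nonpos[of "\<lambda>_. c" f t x] Q_const by auto

lemma lower_T_ge_const: "(\<And>y. c \<le> f y) \<Longrightarrow> t \<ge> 0 \<Longrightarrow> c \<le> lower_T Q t f x"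
  using lower_T_ge_if_Q_nonneg[of "\<lambda>_. c" f t x] Q_const by auto

lemma lower_T_le_add_const:
  assumes "\<And>y. f y \<le> g y + d" "t \<ge> 0"
  shows "lower_T Q t f x \<le> lower_T Q t g x + d"
proof (rule lower_T_le_supersolution[where v="\<lambda>r y. lower_T Q r g y + d" and dv="\<lambda>s. Q (lower_T Q s g)"])
  show "((\<lambda>r. lower_T Q r g x + d) has_real_derivative Q (lower_T Q t g) x) (at t within {0..})"
    if "t \<ge> 0" for t x
    using lower_T_has_derivative[OF that, of g x] by (auto intro!: derivative_eq_intros)
qed (use assms lower_T_0 Q_add_const in auto)

lemma lower_T_mono: "(\<And>y. f y \<le> g y) \<Longrightarrow> t \<ge> 0 \<Longrightarrow> lower_T Q t f x \<le> lower_T Q t g x"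
  using lower_T_le_add_const[of f g 0 t x] by simp

lemma lower_T_nonexpansive:
  assumes "\<And>y. \<bar>f y - g y\<bar> \<le> d" "t \<ge> 0"
  shows "\<bar>lower_T Q t f x - lower_T Q t g x\<bar> \<le> d"
proof -
  have "f y \<le> g y + d" "g y \<le> f y + d" for y
    using assms(1)[of y] by (auto simp: abs_le_iff)
  then have "lower_T Q t f x \<le> lower_T Q t g x + d" "lower_T Q t g x \<le> lower_T Q t f x + d"
    using assms(2) by (blast intro: lower_T_le_add_const)+
  then show ?thesis by simp
qed

lemma lower_T_add:
  assumes "s \<ge> 0" "t \<ge> 0"
  shows "lower_T Q (s + t) f = lower_T Q t (lower_T Q s f)"
proof (cases "s = 0")
  case True
  then show ?thesis by (simp add: lower_T_0)
next
  case False
  with assms have "s > 0" by simp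
  define g where "g r = (if r < 0 then lower_T Q s f else lower_T Q (s + r) f)" for r
  have "((\<lambda>r. g r x) has_real_derivative Q (g r) x) (at r within {0..})" if "r \<ge> 0" for r x
  proof -
    have "at (s + r) within {0..} = at (s + r)"
      by (rule at_within_interior) (use that \<open>s > 0\<close> in auto)
    then have "((\<lambda>r. lower_T Q r f x) has_real_derivative Q (lower_T Q (s + r) f) x) (at (s + r))"
      using lower_T_has_derivative[of "s + r" f x] that assms by simp
    then have "((\<lambda>r. lower_T Q (s + r) f x) has_real_derivative Q (lower_T Q (s + r) f) x * 1)
        (at r within {0..})"
      by (rule DERIV_chain2[where g="\<lambda>r. s + r"]) (auto intro!: derivative_eq_intros)
    then have "((\<lambda>r. lower_T Q (s + r) f x) has_real_derivative Q (g r) x) (at r within {0..})"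
      using that by (simp add: g_def)
    then show ?thesis
      by (rule has_field_derivative_transform_within[where d=1]) (use that in \<open>auto simp: g_def\<close>)
  qed
  then have "solves_rate_equation Q (lower_T Q s f) g"
    unfolding solves_rate_equation_def by (auto simp: g_def)
  then have "lower_T Q t (lower_T Q s f) = g t"
    by (rule lower_T_eq_solution)
  then show ?thesis using assms by (simp add: g_def)
qed

end

section \<open>Upper closed sets and the lower reachability recursion\<close>

definition upper_closed :: "(('x \<Rightarrow> real) \<Rightarrow> ('x \<Rightarrow> real)) \<Rightarrow> 'x set \<Rightarrow> bool" where
  "upper_closed Q C \<longleftrightarrow> (\<forall>x\<in>C. \<forall>w. w \<noteq> x \<longrightarrow> upper_op Q (indicator {w}) x > 0 \<longrightarrow> w \<in> C)"

lemma upper_reachable_refl: "upper_reachable Q x x"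
  unfolding upper_reachable_def by (rule exI[of _ "[x]"]) auto

lemma upper_reachable_step:
  assumes "upper_reachable Q x y" "w \<noteq> x" "upper_op Q (indicator {w}) x > 0"
  shows "upper_reachable Q w y"
proof -
  obtain xs where xs: "xs \<noteq> []" "hd xs = y" "last xs = x"
    "\<And>k. Suc k < length xs \<Longrightarrow> xs ! Suc k \<noteq> xs ! k \<and> upper_op Q (indicator {xs ! Suc k}) (xs ! k) > 0"
    using assms(1) unfolding upper_reachable_def by blast
  have "(xs @ [w]) ! Suc k \<noteq> (xs @ [w]) ! k \<and>
      upper_op Q (indicator {(xs @ [w]) ! Suc k}) ((xs @ [w]) ! k) > 0"
    if "Suc k < length (xs @ [w])" for k
  proof (cases "Suc k < length xs")
    case True
    then show ?thesis using xs(4) by (simp add: nth_append)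
  next
    case False
    with that have "Suc k = length xs" "k = length xs - 1" by simp_all
    then have "(xs @ [w]) ! Suc k = w" "(xs @ [w]) ! k = x"
      using xs(1,3) by (simp_all add: nth_append last_conv_nth)
    then show ?thesis using assms by simp
  qed
  then show ?thesis
    unfolding upper_reachable_def using xs by (intro exI[of _ "xs @ [w]"]) auto
qed

lemma upper_closed_reachable:
  assumes "upper_closed Q C" "y \<in> C" "upper_reachable Q x y"
  shows "x \<in> C"
proof -
  obtain xs where xs: "xs \<noteq> []" "hd xs = y" "last xs = x"
    "\<forall>k. Suc k < length xs \<longrightarrow> xs ! Suc k \<noteq> xs ! k \<and> upper_op Q (indicator {xs ! Suc k}) (xs ! k) > 0"
    using assms(3) unfolding upper_reachable_def by blast
  have "k < length xs \<Longrightarrow> xs ! k \<in> C" for k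
  proof (induction k)
    case 0
    then show ?case using xs(1,2) assms(2) by (simp add: hd_conv_nth)
  next
    case (Suc k)
    then show ?case using xs(4) assms(1) unfolding upper_closed_def by auto
  qed
  from this[of "length xs - 1"] show ?thesis
    using xs(1,3) by (simp add: last_conv_nth)
qed

lemma upper_closed_reachable_set: "upper_closed Q {x. upper_reachable Q x y}"
  unfolding upper_closed_def by (auto intro: upper_reachable_step)

lemma upper_closed_X1A: "upper_closed Q (X1A Q)"
  unfolding upper_closed_def X1A_def by (auto intro: upper_reachable_step)

lemma X1A_subset_upper_closed:
  assumes "upper_closed Q C" "C \<noteq> {}"
  shows "X1A Q \<subseteq> C"
proof
  fix x assume "x \<in> X1A Q"
  moreover obtain y where "y \<in> C" using assms(2) by blast
  ultimately show "x \<in> C"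
    using upper_closed_reachable[OF assms(1)] unfolding X1A_def by blast
qed

lemma lower_seq_mono: "k \<le> m \<Longrightarrow> lower_seq Q A k \<subseteq> lower_seq Q A m"
  by (induction m) (auto simp: le_Suc_eq)

lemma lower_seq_stabilizes:
  fixes A :: "'x::finite set"
  shows "\<exists>n. lower_seq Q A n = lower_seq Q A (Suc n)"
proof (rule ccontr)
  assume "\<not> ?thesis"
  then have "lower_seq Q A n \<subset> lower_seq Q A (Suc n)" for n
    using lower_seq_mono[of n "Suc n" Q A] by auto
  then have "card (lower_seq Q A n) < card (lower_seq Q A (Suc n))" for n
    by (intro psubset_card_mono) auto
  then have "n \<le> card (lower_seq Q A n)" for n
    by (induction n) (auto intro: Suc_leI order.trans)
  moreover have "card (lower_seq Q A (Suc CARD('x))) \<le> CARD('x)"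
    by (rule card_mono) auto
  ultimately show False
    by (metis Suc_n_not_le_n le_trans)
qed

definition lower_closure :: "(('x \<Rightarrow> real) \<Rightarrow> ('x \<Rightarrow> real)) \<Rightarrow> 'x set \<Rightarrow> 'x set" where
  "lower_closure Q A = lower_seq Q A (LEAST n. lower_seq Q A n = lower_seq Q A (Suc n))"

lemma lower_reachable_iff: "lower_reachable Q A x \<longleftrightarrow> x \<in> lower_closure Q A"
  unfolding lower_reachable_def lower_closure_def ..

lemma subset_lower_closure: "A \<subseteq> lower_closure Q A"
  unfolding lower_closure_def using lower_seq_mono[of 0 _ Q A] by simp

lemma Q_indicator_outside_lower_closure:
  fixes A :: "'x::finite set"
  assumes "y \<notin> lower_closure Q A"
  shows "Q (indicator (lower_closure Q A)) y \<le> 0"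
proof -
  define n where "n = (LEAST n. lower_seq Q A n = lower_seq Q A (Suc n))"
  have "lower_seq Q A n = lower_seq Q A (Suc n)"
    unfolding n_def by (rule LeastI_ex) (rule lower_seq_stabilizes)
  then have "lower_seq Q A n \<union> {y. y \<notin> lower_seq Q A n \<and> Q (indicator (lower_seq Q A n)) y > 0}
      = lower_seq Q A n"
    by simp
  then show ?thesis
    using assms unfolding lower_closure_def n_def[symmetric] by (metis (lifting) CollectI UnCI not_less)
qed

section \<open>Necessity of the reachability conditions\<close>

context lower_transition_rate_operator
begin

lemma Q_indicator_inside_nonpos:
  assumes "y \<in> B"
  shows "Q (indicator B) y \<le> 0"
proof -
  have "0 \<le> Q (indicator (- B)) y"
    by (rule Q_nonneg_at_zero_of_nonneg) (use assms in auto)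
  moreover have "Q (indicator B) y \<le> - Q (indicator (- B)) y"
    using Q_indicator_Compl[of "- B"] Q_uminus_le[of "indicator (- B)" y] by simp
  ultimately show ?thesis by simp
qed

lemma Q_indicator_upper_closed_nonneg:
  assumes "upper_closed Q C"
  shows "0 \<le> Q (indicator C) x"
proof (cases "x \<in> C")
  case False
  then show ?thesis by (intro Q_nonneg_at_zero_of_nonneg) auto
next
  case True
  have "(\<lambda>y. - indicator (- C) y :: real) = (\<lambda>y. \<Sum>w\<in>- C. - indicator {w} y)"
    by (auto simp: sum_negf indicator_def)
  then have "(\<Sum>w\<in>- C. Q (\<lambda>y. - indicator {w} y) x) \<le> Q (indicator C) x"
    using Q_superadditive_sum[of "- C" "\<lambda>w y. - indicator {w} y" x] Q_indicator_Compl[of "- C"]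
    by simp
  moreover have "0 \<le> Q (\<lambda>y. - indicator {w} y) x" if "w \<in> - C" for w
    using assms True that unfolding upper_closed_def upper_op_def by force
  ultimately show ?thesis
    by (meson order_trans sum_nonneg)
qed

lemma Q_indicator_Compl_upper_closed_nonpos:
  assumes "upper_closed Q C"
  shows "Q (indicator (- C)) x \<le> 0"
  using Q_indicator_Compl[of C] Q_uminus_le[of "indicator C" x]
    Q_indicator_upper_closed_nonneg[OF assms, of x] by simp

lemma lower_T_indicator_upper_closed:
  assumes "upper_closed Q C" "x \<in> C" "t \<ge> 0"
  shows "lower_T Q t (indicator C) x = 1"
proof -
  have "indicator C x \<le> lower_T Q t (indicator C) x"
    by (rule lower_T_ge_if_Q_nonneg) (use Q_indicator_upper_closed_nonneg[OF assms(1)] assms in auto)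
  moreover have "lower_T Q t (indicator C) x \<le> 1"
    by (rule lower_T_le_const) (use assms in \<open>auto simp: indicator_def\<close>)
  ultimately show ?thesis using assms by simp
qed

lemma ergodic_bounds_ordered:
  assumes "ergodic Q"
    and "\<And>t. t \<ge> 0 \<Longrightarrow> a \<le> lower_T Q t f x" "\<And>t. t \<ge> 0 \<Longrightarrow> lower_T Q t f y \<le> b"
  shows "a \<le> b"
proof -
  obtain c where "((\<lambda>t. lower_T Q t f) \<longlongrightarrow> (\<lambda>_. c)) at_top"
    using assms(1) unfolding ergodic_def by blast
  then have lim: "((\<lambda>t. lower_T Q t f z) \<longlongrightarrow> c) at_top" for z
    unfolding tendsto_fun_iff by blast
  have "a \<le> c"
    by (rule tendsto_lowerbound[OF lim]) (auto intro: eventually_ge_at_top[of 0, THEN eventually_mono] assms(2))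
  moreover have "c \<le> b"
    by (rule tendsto_upperbound[OF lim]) (auto intro: eventually_ge_at_top[of 0, THEN eventually_mono] assms(3))
  ultimately show ?thesis by simp
qed

text \<open>If X1A were empty, a reach set of minimal cardinality would be a minimal upper closed
  class, and some state would not reach it; the indicator of the class then converges to 1 on it
  and stays at 0 on the (disjoint) reach set of that state.\<close>

lemma ergodic_X1A_nonempty:
  assumes "ergodic Q"
  shows "X1A Q \<noteq> {}"
proof
  assume empty: "X1A Q = {}"
  define R where "R y = {x. upper_reachable Q x y}" for y
  have closed: "upper_closed Q (R y)" and self: "y \<in> R y" for y
    unfolding R_def by (simp_all add: upper_closed_reachable_set upper_reachable_refl)
  have R_subset: "R x \<subseteq> R y" if "x \<in> R y" for x y
    using upper_closed_reachable[OF closed that] unfolding R_def by blast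
  obtain y1 where y1: "\<And>y. card (R y1) \<le> card (R y)"
    using ex_has_least_nat[where P="\<lambda>_. True" and m="\<lambda>y. card (R y)"] by blast
  have R_eq: "R x = R y1" if "x \<in> R y1" for x
    using card_subset_eq[OF _ R_subset[OF that]] card_mono[OF _ R_subset[OF that]] y1[of x] by simp
  obtain y2 where "y1 \<notin> R y2"
    using empty unfolding X1A_def R_def by auto
  then have disjoint: "R y1 \<inter> R y2 = {}"
    using R_eq R_subset self by blast
  have "1 \<le> (0::real)"
  proof (rule ergodic_bounds_ordered[OF assms])
    show "1 \<le> lower_T Q t (indicator (R y1)) y1" if "t \<ge> 0" for t
      using lower_T_indicator_upper_closed[OF closed self that] by simp
    show "lower_T Q t (indicator (R y1)) y2 \<le> 0" if "t \<ge> 0" for t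
    proof -
      have "lower_T Q t (indicator (R y1)) y2 \<le> indicator (- R y2) y2"
        by (rule lower_T_le_if_Q_nonpos[OF Q_indicator_Compl_upper_closed_nonpos[OF closed]])
          (use disjoint that in \<open>auto simp: indicator_def\<close>)
      then show ?thesis using self by simp
    qed
  qed
  then show False by simp
qed

lemma ergodic_lower_reachable_X1A:
  assumes "ergodic Q" "X1A Q \<noteq> {}"
  shows "lower_reachable Q (X1A Q) x"
proof (rule ccontr)
  define B where "B = lower_closure Q (X1A Q)"
  assume "\<not> lower_reachable Q (X1A Q) x"
  then have "x \<notin> B"
    unfolding B_def lower_reachable_iff .
  have Q_B: "Q (indicator B) y \<le> 0" for y
    using Q_indicator_inside_nonpos Q_indicator_outside_lower_closure unfolding B_def by blast
  obtain z where z: "z \<in> X1A Q" using assms(2) by blast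
  have "1 \<le> (0::real)"
  proof (rule ergodic_bounds_ordered[OF assms(1)])
    show "1 \<le> lower_T Q t (indicator B) z" if "t \<ge> 0" for t
    proof -
      have "lower_T Q t (indicator (X1A Q)) z \<le> lower_T Q t (indicator B) z"
        using subset_lower_closure[of "X1A Q" Q] that unfolding B_def
        by (intro lower_T_mono) (auto simp: indicator_def)
      then show ?thesis
        using lower_T_indicator_upper_closed[OF upper_closed_X1A z that] by simp
    qed
    show "lower_T Q t (indicator B) x \<le> 0" if "t \<ge> 0" for t
      using lower_T_le_if_Q_nonpos[OF Q_B, of "indicator B" t x] that \<open>x \<notin> B\<close> by simp
  qed
  then show False by simp
qed

end

section \<open>Sufficiency of the reachability conditions\<close>

context lower_transition_rate_operator
begin

lemma lower_T_has_derivative_at_1: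
  "((\<lambda>r. lower_T Q r g x) has_real_derivative Q (lower_T Q 1 g) x) (at 1)"
proof -
  have "at (1::real) within {0..} = at 1"
    by (rule at_within_interior) auto
  then show ?thesis
    using lower_T_has_derivative[of 1 g x] by simp
qed

lemma Q_lower_T_eq_0_at_max:
  assumes "lower_T Q 1 g x = fun_max g"
  shows "Q (lower_T Q 1 g) x = 0"
  by (rule DERIV_local_max[OF lower_T_has_derivative_at_1, of 1])
    (use assms in \<open>auto intro!: lower_T_le_const fun_max_ge\<close>)

lemma Q_lower_T_eq_0_at_min:
  assumes "lower_T Q 1 g x = fun_min g"
  shows "Q (lower_T Q 1 g) x = 0"
  by (rule DERIV_local_min[OF lower_T_has_derivative_at_1, of 1])
    (use assms in \<open>auto intro!: lower_T_ge_const fun_min_le\<close>)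

text \<open>Writing \<open>h = h x - k\<close> with \<open>k \<ge> 0\<close> and splitting off the \<open>w\<close>-component of \<open>k\<close>, superadditivity
  gives \<open>Q h x \<le> k w * Q (- indicator {w}) x\<close>, which is negative unless \<open>k w = 0\<close>.\<close>

lemma max_spreads_along_upper_transition:
  assumes "\<And>y. h y \<le> h x" "0 \<le> Q h x" "w \<noteq> x" "upper_op Q (indicator {w}) x > 0"
  shows "h w = h x"
proof -
  define k where "k y = h x - h y" for y
  define r where "r y = k y - k w * indicator {w} y" for y
  have k: "0 \<le> k y" for y
    using assms(1) unfolding k_def by simp
  have "0 \<le> Q r x"
  proof (rule Q_nonneg_at_zero_of_nonneg)
    show "0 \<le> r y" for y
      using k[of y] unfolding r_def by (simp add: indicator_def)
    show "r x = 0"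
      using assms(3) unfolding r_def k_def by simp
  qed
  have "(\<lambda>y. - k y + h x) = h"
    unfolding k_def by simp
  then have "Q h x = Q (\<lambda>y. - k y) x"
    using Q_add_const[of "\<lambda>y. - k y" "h x"] by simp
  also have "\<dots> \<le> Q (\<lambda>y. - k y + r y) x - Q r x"
    using Q_superadditive[of "\<lambda>y. - k y" x r] by simp
  also have "\<dots> \<le> Q (\<lambda>y. - k y + r y) x"
    using \<open>0 \<le> Q r x\<close> by simp
  also have "(\<lambda>y. - k y + r y) = (\<lambda>y. k w * (- indicator {w} y))"
    unfolding r_def by simp
  also have "Q \<dots> x = k w * Q (\<lambda>y. - indicator {w} y) x"
    by (rule Q_pos_homogeneous) (rule k)
  finally have "0 \<le> k w * Q (\<lambda>y. - indicator {w} y) x"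
    using assms(2) by simp
  moreover have "Q (\<lambda>y. - indicator {w} y) x < 0"
    using assms(4) unfolding upper_op_def by simp
  ultimately have "k w \<le> 0"
    by (simp add: zero_le_mult_iff)
  then show ?thesis
    using k[of w] unfolding k_def by simp
qed

lemma upper_closed_argmax:
  assumes "\<And>x. h x = fun_max h \<Longrightarrow> 0 \<le> Q h x"
  shows "upper_closed Q {x. h x = fun_max h}"
  unfolding upper_closed_def
proof (intro ballI allI impI)
  fix x w assume x: "x \<in> {x. h x = fun_max h}" and "w \<noteq> x" "0 < upper_op Q (indicator {w}) x"
  then have "h w = h x"
    using assms fun_max_ge by (intro max_spreads_along_upper_transition) auto
  then show "w \<in> {x. h x = fun_max h}"
    using x by simp
qed

text \<open>The set S is separated from the minimum of h by some \<open>\<epsilon> > 0\<close>, so \<open>h - h x \<ge> \<epsilon> * indicator S\<close>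
  with equality at x, and superadditivity gives \<open>\<epsilon> * Q (indicator S) x \<le> Q h x\<close>.\<close>

lemma Q_indicator_nonpos_at_min:
  assumes "\<And>y. h x \<le> h y" "Q h x \<le> 0" "\<And>y. y \<in> S \<Longrightarrow> h x < h y"
  shows "Q (indicator S) x \<le> 0"
proof -
  define \<epsilon> where "\<epsilon> = Min (insert 1 ((\<lambda>y. h y - h x) ` S))"
  define k where "k y = h y - h x" for y
  have "\<epsilon> > 0"
    unfolding \<epsilon>_def using assms(3) by (subst Min_gr_iff) auto
  have \<epsilon>_le: "\<epsilon> \<le> k y" if "y \<in> S" for y
    unfolding \<epsilon>_def k_def by (rule Min_le) (use that in auto)
  have "\<epsilon> * Q (indicator S) x = Q (\<lambda>y. \<epsilon> * indicator S y) x"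
    using Q_pos_homogeneous[of \<epsilon> "indicator S" x] \<open>\<epsilon> > 0\<close> by simp
  also have "\<dots> \<le> Q (\<lambda>y. \<epsilon> * indicator S y + (k y - \<epsilon> * indicator S y)) x"
  proof -
    have "0 \<le> Q (\<lambda>y. k y - \<epsilon> * indicator S y) x"
      by (rule Q_nonneg_at_zero_of_nonneg)
        (use \<epsilon>_le assms(1,3) in \<open>auto simp: k_def indicator_def\<close>)
    then show ?thesis
      using Q_superadditive[of "\<lambda>y. \<epsilon> * indicator S y" x "\<lambda>y. k y - \<epsilon> * indicator S y"] by simp
  qed
  also have "\<dots> = Q k x"
    by simp
  also have "\<dots> = Q h x"
  proof -
    have "(\<lambda>y. k y + h x) = h" by (simp add: k_def)
    then show ?thesis using Q_add_const[of k "h x"] by simp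
  qed
  finally have "\<epsilon> * Q (indicator S) x \<le> 0"
    using assms(2) by linarith
  then show ?thesis
    using \<open>\<epsilon> > 0\<close> by (simp add: mult_le_0_iff)
qed

lemma lower_seq_avoids_argmin:
  assumes "\<And>x. h x = fun_min h \<Longrightarrow> Q h x \<le> 0" "\<And>y. y \<in> A \<Longrightarrow> fun_min h < h y"
  shows "y \<in> lower_seq Q A k \<Longrightarrow> fun_min h < h y"
proof (induction k arbitrary: y)
  case 0
  then show ?case using assms(2) by simp
next
  case (Suc k)
  show ?case
  proof (rule ccontr)
    assume "\<not> fun_min h < h y"
    then have min: "h y = fun_min h"
      using fun_min_le[of h y] by simp
    with Suc.IH have "y \<notin> lower_seq Q A k" by (metis less_irrefl)
    with Suc.prems have "0 < Q (indicator (lower_seq Q A k)) y" by simp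
    moreover have "Q (indicator (lower_seq Q A k)) y \<le> 0"
      by (rule Q_indicator_nonpos_at_min[of h y]) (use min assms(1) Suc.IH fun_min_le in auto)
    ultimately show False by simp
  qed
qed

lemma extrema_preserved_imp_constant:
  assumes "X1A Q \<noteq> {}" "\<forall>x \<in> UNIV - X1A Q. lower_reachable Q (X1A Q) x"
    and max: "fun_max (lower_T Q 1 g) = fun_max g" and min: "fun_min (lower_T Q 1 g) = fun_min g"
  shows "fun_max g = fun_min g"
proof (rule ccontr)
  assume "fun_max g \<noteq> fun_min g"
  define h where "h = lower_T Q 1 g"
  have "Q h x = 0" if "h x = fun_max h" for x
    using Q_lower_T_eq_0_at_max that max unfolding h_def by simp
  then have "upper_closed Q {x. h x = fun_max h}"
    by (intro upper_closed_argmax) simp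
  moreover obtain x where "h x = fun_max h"
    by (rule fun_max_attained)
  ultimately have X1A_max: "X1A Q \<subseteq> {x. h x = fun_max h}"
    using X1A_subset_upper_closed by blast
  have min_Q: "Q h x \<le> 0" if "h x = fun_min h" for x
    using Q_lower_T_eq_0_at_min that min unfolding h_def by simp
  have X1A_min: "fun_min h < h y" if "y \<in> X1A Q" for y
  proof -
    have "h y = fun_max g"
      using X1A_max that max unfolding h_def by auto
    then show ?thesis
      using \<open>fun_max g \<noteq> fun_min g\<close> fun_min_le[of h y] min unfolding h_def by simp
  qed
  have avoid: "fun_min h < h y" if "y \<in> lower_closure Q (X1A Q)" for y
    using lower_seq_avoids_argmin[OF min_Q X1A_min] that unfolding lower_closure_def by blast
  obtain y where "h y = fun_min h"
    by (rule fun_min_attained)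
  moreover have "y \<in> lower_closure Q (X1A Q)"
    using assms(2) subset_lower_closure[of "X1A Q" Q] unfolding lower_reachable_iff by blast
  ultimately show False
    using avoid by force
qed

lemma fun_max_lower_T_antimono:
  assumes "0 \<le> s" "s \<le> t"
  shows "fun_max (lower_T Q t f) \<le> fun_max (lower_T Q s f)"
proof (rule fun_max_least)
  fix y
  have "lower_T Q (t - s) (lower_T Q s f) y \<le> fun_max (lower_T Q s f)"
    using assms by (intro lower_T_le_const fun_max_ge) simp
  then show "lower_T Q t f y \<le> fun_max (lower_T Q s f)"
    using lower_T_add[of s "t - s" f] assms by simp
qed

lemma fun_min_lower_T_mono:
  assumes "0 \<le> s" "s \<le> t"
  shows "fun_min (lower_T Q s f) \<le> fun_min (lower_T Q t f)"
proof (rule fun_min_greatest)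
  fix y
  have "fun_min (lower_T Q s f) \<le> lower_T Q (t - s) (lower_T Q s f) y"
    using assms by (intro lower_T_ge_const fun_min_le) simp
  then show "fun_min (lower_T Q s f) \<le> lower_T Q t f y"
    using lower_T_add[of s "t - s" f] assms by simp
qed

lemma lower_T_tendsto_if_extrema_tendsto:
  assumes "(\<lambda>k. fun_max (lower_T Q (real k) f)) \<longlonglongrightarrow> c"
    and "(\<lambda>k. fun_min (lower_T Q (real k) f)) \<longlonglongrightarrow> c"
  shows "((\<lambda>t. lower_T Q t f) \<longlongrightarrow> (\<lambda>_. c)) at_top"
  unfolding tendsto_fun_iff
proof (intro allI tendstoI)
  fix x and e :: real assume "e > 0"
  obtain K where K: "dist (fun_max (lower_T Q (real K) f)) c < e"
    "dist (fun_min (lower_T Q (real K) f)) c < e"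
    using eventually_conj[OF tendstoD[OF assms(1) \<open>e > 0\<close>] tendstoD[OF assms(2) \<open>e > 0\<close>]]
    unfolding eventually_sequentially by blast
  show "\<forall>\<^sub>F t in at_top. dist (lower_T Q t f x) c < e"
    using eventually_ge_at_top[of "real K"]
  proof eventually_elim
    case (elim t)
    have "fun_min (lower_T Q (real K) f) \<le> lower_T Q t f x"
      using fun_min_lower_T_mono[of "real K" t f] elim fun_min_le[of "lower_T Q t f" x] by simp
    moreover have "lower_T Q t f x \<le> fun_max (lower_T Q (real K) f)"
      using fun_max_lower_T_antimono[of "real K" t f] elim fun_max_ge[of "lower_T Q t f" x] by simp
    ultimately show ?case
      using K by (simp add: dist_real_def abs_less_iff)
  qed
qed

lemma nonexpansive_subseq_limit:
  fixes \<Phi> :: "('x \<Rightarrow> real) \<Rightarrow> real"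
  assumes "\<And>a b d. (\<And>y. \<bar>a y - b y\<bar> \<le> d) \<Longrightarrow> \<bar>\<Phi> a - \<Phi> b\<bar> \<le> d"
    and "(\<lambda>k. \<Phi> (F k)) \<longlonglongrightarrow> L" "strict_mono r" "(F \<circ> r) \<longlonglongrightarrow> G"
  shows "\<Phi> G = L"
proof (rule LIMSEQ_unique)
  have "(\<lambda>k. F (r k) x) \<longlonglongrightarrow> G x" for x
    using assms(4) unfolding tendsto_fun_iff comp_def by blast
  from nonexpansive_tendsto[OF assms(1) this]
  show "(\<lambda>k. \<Phi> (F (r k))) \<longlonglongrightarrow> \<Phi> G" .
  show "(\<lambda>k. \<Phi> (F (r k))) \<longlonglongrightarrow> L"
    using LIMSEQ_subseq_LIMSEQ[OF assms(2,3)] by (simp add: comp_def)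
qed

lemma lower_T_extrema_convergent:
  obtains M m where "(\<lambda>k. fun_max (lower_T Q (real k) f)) \<longlonglongrightarrow> M"
    "(\<lambda>k. fun_min (lower_T Q (real k) f)) \<longlonglongrightarrow> m"
proof -
  have "decseq (\<lambda>k. fun_max (lower_T Q (real k) f))"
    by (rule decseq_SucI, rule fun_max_lower_T_antimono) auto
  moreover have "\<forall>k. fun_min f \<le> fun_max (lower_T Q (real k) f)"
    using fun_max_ge order_trans by (metis lower_T_ge_const fun_min_le of_nat_0_le_iff)
  ultimately obtain M where "(\<lambda>k. fun_max (lower_T Q (real k) f)) \<longlonglongrightarrow> M"
    by (rule decseq_convergent)
  moreover have "incseq (\<lambda>k. fun_min (lower_T Q (real k) f))"
    by (rule incseq_SucI, rule fun_min_lower_T_mono) auto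
  moreover have "\<forall>k. fun_min (lower_T Q (real k) f) \<le> fun_max f"
    using fun_min_le order_trans by (metis lower_T_le_const fun_max_ge of_nat_0_le_iff)
  ultimately show ?thesis
    using that incseq_convergent by metis
qed

text \<open>A limit point g of \<open>T\<^sub>k f\<close> has the limiting extrema, and so does \<open>T\<^sub>1 g\<close>, a limit point of
  \<open>T\<^sub>k\<^sub>+\<^sub>1 f\<close>.\<close>

lemma extrema_preserving_limit_point:
  obtains g where "fun_max (lower_T Q 1 g) = fun_max g" "fun_min (lower_T Q 1 g) = fun_min g"
    "(\<lambda>k. fun_max (lower_T Q (real k) f)) \<longlonglongrightarrow> fun_max g"
    "(\<lambda>k. fun_min (lower_T Q (real k) f)) \<longlonglongrightarrow> fun_min g"
proof -
  define a where "a k = lower_T Q (real k) f" for k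
  have a_Suc: "lower_T Q 1 (a k) = a (Suc k)" for k
    using lower_T_add[of "real k" 1 f] unfolding a_def by (simp add: add.commute)
  obtain M m where M: "(\<lambda>k. fun_max (a k)) \<longlonglongrightarrow> M" and m: "(\<lambda>k. fun_min (a k)) \<longlonglongrightarrow> m"
    unfolding a_def by (rule lower_T_extrema_convergent)
  have "fun_min f \<le> a k x" "a k x \<le> fun_max f" for k x
    unfolding a_def by (auto intro!: lower_T_ge_const lower_T_le_const fun_min_le fun_max_ge)
  then obtain g r where r: "strict_mono r" "(a \<circ> r) \<longlonglongrightarrow> g"
    by (rule bounded_fun_seq_convergent_subseq)
  have T1_M: "(\<lambda>k. fun_max (lower_T Q 1 (a k))) \<longlonglongrightarrow> M"
    unfolding a_Suc by (rule LIMSEQ_Suc[OF M])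
  have T1_m: "(\<lambda>k. fun_min (lower_T Q 1 (a k))) \<longlonglongrightarrow> m"
    unfolding a_Suc by (rule LIMSEQ_Suc[OF m])
  have "fun_max (lower_T Q 1 g) = M"
  proof (rule nonexpansive_subseq_limit[where \<Phi>="\<lambda>u. fun_max (lower_T Q 1 u)" and F=a])
    show "\<bar>fun_max (lower_T Q 1 u) - fun_max (lower_T Q 1 v)\<bar> \<le> d"
      if "\<And>y. \<bar>u y - v y\<bar> \<le> d" for u v d
      by (rule fun_max_nonexpansive, rule lower_T_nonexpansive[OF that]) simp
  qed (use T1_M r in auto)
  moreover have "fun_min (lower_T Q 1 g) = m"
  proof (rule nonexpansive_subseq_limit[where \<Phi>="\<lambda>u. fun_min (lower_T Q 1 u)" and F=a])
    show "\<bar>fun_min (lower_T Q 1 u) - fun_min (lower_T Q 1 v)\<bar> \<le> d"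
      if "\<And>y. \<bar>u y - v y\<bar> \<le> d" for u v d
      by (rule fun_min_nonexpansive, rule lower_T_nonexpansive[OF that]) simp
  qed (use T1_m r in auto)
  moreover have "fun_max g = M"
    by (rule nonexpansive_subseq_limit[OF fun_max_nonexpansive M r])
  moreover have "fun_min g = m"
    by (rule nonexpansive_subseq_limit[OF fun_min_nonexpansive m r])
  ultimately show ?thesis
    using M m unfolding a_def by (intro that[of g]) simp_all
qed

lemma ergodic_if_reachability:
  assumes "X1A Q \<noteq> {}" "\<forall>x \<in> UNIV - X1A Q. lower_reachable Q (X1A Q) x"
  shows "ergodic Q"
  unfolding ergodic_def
proof
  fix f
  obtain g where "fun_max (lower_T Q 1 g) = fun_max g" "fun_min (lower_T Q 1 g) = fun_min g"
    and lim: "(\<lambda>k. fun_max (lower_T Q (real k) f)) \<longlonglongrightarrow> fun_max g"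
      "(\<lambda>k. fun_min (lower_T Q (real k) f)) \<longlonglongrightarrow> fun_min g"
    by (rule extrema_preserving_limit_point)
  then have "fun_max g = fun_min g"
    using extrema_preserved_imp_constant assms by blast
  then show "\<exists>c. ((\<lambda>t. lower_T Q t f) \<longlongrightarrow> (\<lambda>_. c)) at_top"
    using lower_T_tendsto_if_extrema_tendsto lim by metis
qed

end

theorem theorem1:
  fixes Q :: "('x::finite \<Rightarrow> real) \<Rightarrow> ('x \<Rightarrow> real)"
  assumes "lower_trans_rate_op Q"
  shows "ergodic Q \<longleftrightarrow>
           (X1A Q \<noteq> {} \<and> (\<forall>x \<in> UNIV - X1A Q. lower_reachable Q (X1A Q) x))"
proof -
  interpret lower_transition_rate_operator Q
    by unfold_locales (rule assms)
  show ?thesis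
    using ergodic_X1A_nonempty ergodic_lower_reachable_X1A ergodic_if_reachability by blast
qed

end
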